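(* Let $T=\{a,b,c,d,e\}$ be the semigroup with multiplication $ay=a$, $dy=d$, $ey=e$ for all $y\in T$, and $ba=bb=bd=a$, $bc=b$, $be=d$, $ca=cb=cd=a$, $cc=c$, $ce=e$. (This $T$ is the dual $(\ell_3^{\mathsf{bar}})^{\mathsf{op}}$.) Then (i) the identities satisfied by $T$ are axiomatized by $xy^2\approx xy$ and $xyz\approx xyzy$; (ii) the subpseudovariety of $\llbracket T\rrbracket$ defined by the identity $xyzx\approx xyxz$ is the unique maximal subpseudovariety of $\llbracket T\rrbracket$.
   Context: Identities are between words over a countably infinite alphabet of variables. A pseudovariety is a class of finite semigroups closed under finite direct products, subsemigroups and homomorphic images; $\llbracket S\rrbracket$ is the pseudovariety generated by $S$; a maximal subpseudovariety is a maximal proper subpseudovariety. *)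

theory Defs
  imports Main
begin

text \<open>Words over the countably infinite alphabet of variables nat are nonempty
lists of naturals. An identity is a pair of words.\<close>

fun eval_word :: "('a \<Rightarrow> 'a \<Rightarrow> 'a) \<Rightarrow> (nat \<Rightarrow> 'a) \<Rightarrow> nat list \<Rightarrow> 'a" where
  "eval_word m h [x] = h x"
| "eval_word m h (x # y # w) = m (h x) (eval_word m h (y # w))"
| "eval_word m h [] = undefined"

type_synonym 'a sgrp = "'a set \<times> ('a \<Rightarrow> 'a \<Rightarrow> 'a)"

definition is_semigroup :: "'a sgrp \<Rightarrow> bool" where
  "is_semigroup S \<longleftrightarrow> fst S \<noteq> {}
     \<and> (\<forall>x\<in>fst S. \<forall>y\<in>fst S. snd S x y \<in> fst S)
     \<and> (\<forall>x\<in>fst S. \<forall>y\<in>fst S. \<forall>z\<in>fst S. snd S (snd S x y) z = snd S x (snd S y z))"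

definition finite_semigroup :: "'a sgrp \<Rightarrow> bool" where
  "finite_semigroup S \<longleftrightarrow> is_semigroup S \<and> finite (fst S)"

definition satisfies :: "'a sgrp \<Rightarrow> nat list \<Rightarrow> nat list \<Rightarrow> bool" where
  "satisfies S u v \<longleftrightarrow> (\<forall>h. (\<forall>x. h x \<in> fst S) \<longrightarrow> eval_word (snd S) h u = eval_word (snd S) h v)"

definition subst_word :: "(nat \<Rightarrow> nat list) \<Rightarrow> nat list \<Rightarrow> nat list" where
  "subst_word \<sigma> w = concat (map \<sigma> w)"

inductive derivable :: "(nat list \<times> nat list) set \<Rightarrow> nat list \<Rightarrow> nat list \<Rightarrow> bool"
  for E where
  ax: "(u, v) \<in> E \<Longrightarrow> derivable E u v"
| refl: "u \<noteq> [] \<Longrightarrow> derivable E u u"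
| sym: "derivable E u v \<Longrightarrow> derivable E v u"
| trans: "derivable E u v \<Longrightarrow> derivable E v w \<Longrightarrow> derivable E u w"
| mult_left: "derivable E u v \<Longrightarrow> w \<noteq> [] \<Longrightarrow> derivable E (w @ u) (w @ v)"
| mult_right: "derivable E u v \<Longrightarrow> w \<noteq> [] \<Longrightarrow> derivable E (u @ w) (v @ w)"
| subst: "derivable E u v \<Longrightarrow> (\<forall>x. \<sigma> x \<noteq> []) \<Longrightarrow>
           derivable E (subst_word \<sigma> u) (subst_word \<sigma> v)"

definition is_hom :: "'a sgrp \<Rightarrow> 'b sgrp \<Rightarrow> ('a \<Rightarrow> 'b) \<Rightarrow> bool" where
  "is_hom S S' \<phi> \<longleftrightarrow> (\<forall>x\<in>fst S. \<phi> x \<in> fst S')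
     \<and> (\<forall>x\<in>fst S. \<forall>y\<in>fst S. \<phi> (snd S x y) = snd S' (\<phi> x) (\<phi> y))"

definition is_iso :: "'a sgrp \<Rightarrow> 'b sgrp \<Rightarrow> ('a \<Rightarrow> 'b) \<Rightarrow> bool" where
  "is_iso S S' \<phi> \<longleftrightarrow> is_hom S S' \<phi> \<and> bij_betw \<phi> (fst S) (fst S')"

definition prod_sgrp :: "'a sgrp \<Rightarrow> 'b sgrp \<Rightarrow> ('a \<times> 'b) sgrp" where
  "prod_sgrp S1 S2 = (fst S1 \<times> fst S2,
     \<lambda>(a, b) (c, d). (snd S1 a c, snd S2 b d))"

text \<open>Finite semigroups are represented (up to isomorphism) by finite semigroups
whose carrier is a set of natural numbers. A pseudovariety is a class of such
semigroups closed under finite direct products (including the empty product,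
the trivial semigroup), subsemigroups and homomorphic images (in particular
under isomorphism).\<close>
definition pseudovariety :: "nat sgrp set \<Rightarrow> bool" where
  "pseudovariety V \<longleftrightarrow>
     (\<forall>S\<in>V. finite_semigroup S)
   \<and> (\<forall>S. finite_semigroup S \<and> card (fst S) = 1 \<longrightarrow> S \<in> V)
   \<and> (\<forall>S1\<in>V. \<forall>S2\<in>V. \<forall>P \<phi>. finite_semigroup P \<and> is_iso P (prod_sgrp S1 S2) \<phi> \<longrightarrow> P \<in> V)
   \<and> (\<forall>S\<in>V. \<forall>B. B \<noteq> {} \<and> B \<subseteq> fst S \<and> (\<forall>x\<in>B. \<forall>y\<in>B. snd S x y \<in> B)
          \<longrightarrow> (B, snd S) \<in> V)
   \<and> (\<forall>S\<in>V. \<forall>S' \<phi>. finite_semigroup S' \<and> is_hom S S' \<phi> \<and> \<phi> ` fst S = fst S'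
          \<longrightarrow> S' \<in> V)"

definition generated_pv :: "nat sgrp \<Rightarrow> nat sgrp set" where
  "generated_pv S = \<Inter> {V. pseudovariety V \<and> S \<in> V}"

definition maximal_subpv :: "nat sgrp set \<Rightarrow> nat sgrp set \<Rightarrow> bool" where
  "maximal_subpv W U \<longleftrightarrow> pseudovariety W \<and> W \<subset> U
     \<and> (\<forall>V. pseudovariety V \<and> W \<subseteq> V \<and> V \<subset> U \<longrightarrow> V = W)"

text \<open>Elements a, b, c, d, e are encoded as 0, 1, 2, 3, 4.\<close>
definition T_mult :: "nat \<Rightarrow> nat \<Rightarrow> nat" where
  "T_mult x y =
    (if x = 1 then (if y = 2 then 1 else if y = 4 then 3 else 0)
     else if x = 2 then (if y = 2 then 2 else if y = 4 then 4 else 0)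
     else x)"

definition T_sgrp :: "nat sgrp" where
  "T_sgrp = ({0, 1, 2, 3, 4}, T_mult)"

end

theory Submission
  imports Defs "HOL-Library.Nat_Bijection"
begin

text \<open>A word x t evaluates in T to h(x) h(z), where z is the first letter of t that h does
  not send to the idempotent c; so T identifies two words iff they have the same first letter
  and list the letters of their tails in the same order of first occurrence. The two identities
  rewrite every word into this normal form, which gives (i).

  T fails xyzx = xyxz, so the class W of members of the pseudovariety generated by T that
  satisfy it is a proper subpseudovariety. Conversely, let S satisfy the basis but not
  xyzx = xyxz. Every identity of S holds in T: a substitution separating the two sides of an
  identity failing in T, followed by rewriting into normal form, would derive xyzx = xyxz.
  Since T is generated by three elements, it is then a quotient of a subsemigroup of a finite
  power of S. Hence every proper subpseudovariety omits all such S, i.e. is contained in W.\<close>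

section \<open>Words and equational logic\<close>

lemma eval_word_Cons: "w \<noteq> [] \<Longrightarrow> eval_word m h (x # w) = m (h x) (eval_word m h w)"
  by (cases w) auto

lemma eval_word_cong: "(\<And>x. x \<in> set w \<Longrightarrow> h x = g x) \<Longrightarrow> eval_word m h w = eval_word m g w"
proof (induction w)
  case (Cons x w) then show ?case by (cases "w = []") (auto simp: eval_word_Cons)
qed simp

lemma eval_word_in:
  assumes "is_semigroup S" "\<forall>x. h x \<in> fst S" "u \<noteq> []"
  shows "eval_word (snd S) h u \<in> fst S"
  using assms(3)
proof (induction u)
  case (Cons x w) then show ?case using assms(1,2) unfolding is_semigroup_def
    by (cases "w = []") (auto simp: eval_word_Cons)
qed simp

lemma eval_word_append:
  assumes S: "is_semigroup S" and h: "\<forall>x. h x \<in> fst S" and "u \<noteq> []" "v \<noteq> []"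
  shows "eval_word (snd S) h (u @ v) = snd S (eval_word (snd S) h u) (eval_word (snd S) h v)"
  using \<open>u \<noteq> []\<close>
proof (induction u)
  case (Cons x w)
  show ?case
  proof (cases "w = []")
    case False
    then have "eval_word (snd S) h (w @ v) = snd S (eval_word (snd S) h w) (eval_word (snd S) h v)"
      using Cons.IH by blast
    then show ?thesis using False \<open>v \<noteq> []\<close> S h eval_word_in[OF S h]
      unfolding is_semigroup_def by (simp add: eval_word_Cons)
  qed (use \<open>v \<noteq> []\<close> in \<open>simp add: eval_word_Cons\<close>)
qed simp

lemma subst_word_nonempty: "\<forall>x. \<sigma> x \<noteq> [] \<Longrightarrow> u \<noteq> [] \<Longrightarrow> subst_word \<sigma> u \<noteq> []"
  by (cases u) (auto simp: subst_word_def)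

lemma eval_word_subst:
  assumes S: "is_semigroup S" and h: "\<forall>x. h x \<in> fst S" and \<sigma>: "\<forall>x. \<sigma> x \<noteq> []" and "u \<noteq> []"
  shows "eval_word (snd S) h (subst_word \<sigma> u) = eval_word (snd S) (\<lambda>x. eval_word (snd S) h (\<sigma> x)) u"
  using \<open>u \<noteq> []\<close>
proof (induction u)
  case (Cons x w)
  then show ?case using eval_word_append[OF S h] \<sigma> subst_word_nonempty[OF \<sigma>]
    by (cases "w = []") (simp_all add: subst_word_def eval_word_Cons)
qed simp

lemma derivable_nonempty:
  assumes "\<forall>(u, v)\<in>E. u \<noteq> [] \<and> v \<noteq> []" "derivable E u v"
  shows "u \<noteq> [] \<and> v \<noteq> []"
  using assms(2)
  by (induction rule: derivable.induct) (use assms(1) subst_word_nonempty in auto)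

theorem satisfies_if_derivable:
  assumes S: "is_semigroup S" and E: "\<forall>(u, v)\<in>E. u \<noteq> [] \<and> v \<noteq> [] \<and> satisfies S u v"
    and "derivable E u v"
  shows "satisfies S u v"
proof -
  have nonempty: "u \<noteq> [] \<and> v \<noteq> []" if "derivable E u v" for u v
    using derivable_nonempty[OF _ that] E by auto
  show ?thesis
    using \<open>derivable E u v\<close>
  proof (induction rule: derivable.induct)
    case (mult_left u v w)
    then show ?case using nonempty eval_word_append[OF S] unfolding satisfies_def by auto
  next
    case (mult_right u v w)
    then show ?case using nonempty eval_word_append[OF S] unfolding satisfies_def by auto
  next
    case (subst u v \<sigma>)
    show ?case unfolding satisfies_def
    proof (intro allI impI)
      fix h :: "nat \<Rightarrow> 'a" assume h: "\<forall>x. h x \<in> fst S"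
      then have "\<forall>x. eval_word (snd S) h (\<sigma> x) \<in> fst S" using eval_word_in[OF S] subst(2) by blast
      then show "eval_word (snd S) h (subst_word \<sigma> u) = eval_word (snd S) h (subst_word \<sigma> v)"
        using subst nonempty eval_word_subst[OF S h] unfolding satisfies_def by simp
    qed
  qed (use E in \<open>auto simp: satisfies_def\<close>)
qed

lemma derivable_in_context:
  assumes "derivable E u v" "\<forall>x. \<sigma> x \<noteq> []" "M \<noteq> []"
  shows "derivable E (L @ subst_word \<sigma> u @ M) (L @ subst_word \<sigma> v @ M)"
proof -
  have "derivable E (subst_word \<sigma> u @ M) (subst_word \<sigma> v @ M)"
    using assms by (intro derivable.mult_right derivable.subst)
  then show ?thesis by (cases "L = []") (auto dest: derivable.mult_left[where w = L])
qed

lemma derivable_instance: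
  assumes "(u, v) \<in> E" "\<forall>x. \<sigma> x \<noteq> []"
  shows "derivable E (subst_word \<sigma> u) (subst_word \<sigma> v)"
  using assms by (intro derivable.subst derivable.ax)

section \<open>Pseudovarieties\<close>

definition Mod :: "(nat list \<times> nat list) set \<Rightarrow> nat sgrp set" where
  "Mod E = {S. finite_semigroup S \<and> (\<forall>u v. (u, v) \<in> E \<longrightarrow> satisfies S u v)}"

lemma satisfies_trivial:
  assumes "is_semigroup S" "card (fst S) = 1" "u \<noteq> []" "v \<noteq> []"
  shows "satisfies S u v"
proof -
  obtain z where z: "fst S = {z}" using assms(2) card_1_singletonE by blast
  show ?thesis unfolding satisfies_def
  proof (intro allI impI)
    fix h :: "nat \<Rightarrow> 'a" assume "\<forall>x. h x \<in> fst S"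
    then show "eval_word (snd S) h u = eval_word (snd S) h v"
      using eval_word_in[OF assms(1)] assms(3,4) z by (metis singletonD)
  qed
qed

lemma eval_word_prod_sgrp:
  "u \<noteq> [] \<Longrightarrow> eval_word (snd (prod_sgrp S1 S2)) g u =
     (eval_word (snd S1) (fst \<circ> g) u, eval_word (snd S2) (snd \<circ> g) u)"
proof (induction u)
  case (Cons x w)
  then show ?case by (cases "w = []") (auto simp: eval_word_Cons prod_sgrp_def split: prod.splits)
qed simp

lemma eval_word_hom:
  assumes "is_semigroup S" "is_hom S S' \<phi>" "\<forall>x. h x \<in> fst S" "u \<noteq> []"
  shows "\<phi> (eval_word (snd S) h u) = eval_word (snd S') (\<phi> \<circ> h) u"
  using assms(4)
proof (induction u)
  case (Cons x w)
  then show ?case using eval_word_in[OF assms(1,3)] assms(2,3)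
    by (cases "w = []") (simp_all add: eval_word_Cons is_hom_def)
qed simp

lemma satisfies_iso_prod:
  assumes P: "is_semigroup P" and iso: "is_iso P (prod_sgrp S1 S2) \<phi>"
    and "satisfies S1 u v" "satisfies S2 u v" "u \<noteq> []" "v \<noteq> []"
  shows "satisfies P u v"
  unfolding satisfies_def
proof (intro allI impI)
  fix h :: "nat \<Rightarrow> 'a" assume h: "\<forall>x. h x \<in> fst P"
  have hom: "is_hom P (prod_sgrp S1 S2) \<phi>" and inj: "inj_on \<phi> (fst P)"
    using iso by (auto simp: is_iso_def bij_betw_def)
  have "\<forall>x. (\<phi> \<circ> h) x \<in> fst S1 \<times> fst S2" using hom h by (auto simp: is_hom_def prod_sgrp_def)
  then have "eval_word (snd S1) (fst \<circ> (\<phi> \<circ> h)) u = eval_word (snd S1) (fst \<circ> (\<phi> \<circ> h)) v"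
    "eval_word (snd S2) (snd \<circ> (\<phi> \<circ> h)) u = eval_word (snd S2) (snd \<circ> (\<phi> \<circ> h)) v"
    using assms(3,4) unfolding satisfies_def by (auto simp: mem_Times_iff)
  then have "\<phi> (eval_word (snd P) h u) = \<phi> (eval_word (snd P) h v)"
    by (simp add: eval_word_hom[OF P hom h] eval_word_prod_sgrp assms(5,6))
  then show "eval_word (snd P) h u = eval_word (snd P) h v"
    using inj eval_word_in[OF P h] assms(5,6) by (auto simp: inj_on_def)
qed

lemma satisfies_subsemigroup: "B \<subseteq> fst S \<Longrightarrow> satisfies S u v \<Longrightarrow> satisfies (B, snd S) u v"
  unfolding satisfies_def by auto

lemma satisfies_hom_image:
  assumes S: "is_semigroup S" and hom: "is_hom S S' \<phi>" and onto: "\<phi> ` fst S = fst S'"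
    and "satisfies S u v" "u \<noteq> []" "v \<noteq> []"
  shows "satisfies S' u v"
  unfolding satisfies_def
proof (intro allI impI)
  fix h :: "nat \<Rightarrow> 'b" assume "\<forall>x. h x \<in> fst S'"
  then have "\<forall>x. \<exists>y. y \<in> fst S \<and> \<phi> y = h x" using onto by (metis imageE)
  then obtain g where g: "\<forall>x. g x \<in> fst S \<and> \<phi> (g x) = h x" by metis
  then have "\<forall>x. g x \<in> fst S" and gh: "\<phi> \<circ> g = h" by auto
  moreover have "eval_word (snd S) g u = eval_word (snd S) g v"
    using assms(4) g unfolding satisfies_def by blast
  ultimately show "eval_word (snd S') h u = eval_word (snd S') h v"
    using eval_word_hom[OF S hom] assms(5,6) by metis
qed

lemma finite_subsemigroup:
  assumes "finite_semigroup S" "B \<noteq> {}" "B \<subseteq> fst S" "\<forall>x\<in>B. \<forall>y\<in>B. snd S x y \<in> B"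
  shows "finite_semigroup (B, snd S)"
  using assms unfolding finite_semigroup_def is_semigroup_def
  by (simp add: finite_subset subset_iff)

lemma pseudovarietyI:
  assumes "\<And>S. S \<in> V \<Longrightarrow> finite_semigroup S"
    and "\<And>S. finite_semigroup S \<Longrightarrow> card (fst S) = 1 \<Longrightarrow> S \<in> V"
    and "\<And>S1 S2 P \<phi>. S1 \<in> V \<Longrightarrow> S2 \<in> V \<Longrightarrow> finite_semigroup P \<Longrightarrow>
           is_iso P (prod_sgrp S1 S2) \<phi> \<Longrightarrow> P \<in> V"
    and "\<And>S B. S \<in> V \<Longrightarrow> B \<noteq> {} \<Longrightarrow> B \<subseteq> fst S \<Longrightarrow> \<forall>x\<in>B. \<forall>y\<in>B. snd S x y \<in> B \<Longrightarrow>
           (B, snd S) \<in> V"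
    and "\<And>S S' \<phi>. S \<in> V \<Longrightarrow> finite_semigroup S' \<Longrightarrow> is_hom S S' \<phi> \<Longrightarrow> \<phi> ` fst S = fst S' \<Longrightarrow>
           S' \<in> V"
  shows "pseudovariety V"
  unfolding pseudovariety_def by (intro conjI ballI allI impI; (elim conjE)?; rule assms; assumption)

lemma
  assumes "pseudovariety V"
  shows pseudovariety_finite: "S \<in> V \<Longrightarrow> finite_semigroup S"
    and pseudovariety_trivial: "finite_semigroup S \<Longrightarrow> card (fst S) = 1 \<Longrightarrow> S \<in> V"
    and pseudovariety_iso_prod: "S1 \<in> V \<Longrightarrow> S2 \<in> V \<Longrightarrow> finite_semigroup P \<Longrightarrow>
           is_iso P (prod_sgrp S1 S2) \<phi> \<Longrightarrow> P \<in> V"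
    and pseudovariety_subsemigroup: "S \<in> V \<Longrightarrow> B \<noteq> {} \<Longrightarrow> B \<subseteq> fst S \<Longrightarrow>
           \<forall>x\<in>B. \<forall>y\<in>B. snd S x y \<in> B \<Longrightarrow> (B, snd S) \<in> V"
    and pseudovariety_hom_image: "S \<in> V \<Longrightarrow> finite_semigroup S' \<Longrightarrow> is_hom S S' \<psi> \<Longrightarrow>
           \<psi> ` fst S = fst S' \<Longrightarrow> S' \<in> V"
  using assms unfolding pseudovariety_def by (elim conjE; meson)+

lemma pseudovariety_Mod:
  assumes E: "\<And>u v. (u, v) \<in> E \<Longrightarrow> u \<noteq> [] \<and> v \<noteq> []"
  shows "pseudovariety (Mod E)"
proof (rule pseudovarietyI)
  fix S :: "nat sgrp" assume "finite_semigroup S" "card (fst S) = 1"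
  then show "S \<in> Mod E"
    using E satisfies_trivial[of S] unfolding Mod_def finite_semigroup_def by blast
next
  fix S1 S2 P :: "nat sgrp" and \<phi> :: "nat \<Rightarrow> nat \<times> nat"
  assume "S1 \<in> Mod E" "S2 \<in> Mod E" "finite_semigroup P" "is_iso P (prod_sgrp S1 S2) \<phi>"
  then show "P \<in> Mod E"
    using E satisfies_iso_prod[of P S1 S2 \<phi>] unfolding Mod_def finite_semigroup_def by blast
next
  fix S :: "nat sgrp" and B
  assume "S \<in> Mod E" "B \<noteq> {}" "B \<subseteq> fst S" "\<forall>x\<in>B. \<forall>y\<in>B. snd S x y \<in> B"
  then show "(B, snd S) \<in> Mod E"
    using finite_subsemigroup[of S B] satisfies_subsemigroup[of B S] unfolding Mod_def by blast
next
  fix S S' :: "nat sgrp" and \<phi> :: "nat \<Rightarrow> nat"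
  assume "S \<in> Mod E" "finite_semigroup S'" "is_hom S S' \<phi>" "\<phi> ` fst S = fst S'"
  then show "S' \<in> Mod E"
    using E satisfies_hom_image[of S S' \<phi>] unfolding Mod_def finite_semigroup_def by blast
qed (simp add: Mod_def)

lemma pseudovariety_Inter:
  assumes "F \<noteq> {}" and pv: "\<And>V. V \<in> F \<Longrightarrow> pseudovariety V"
  shows "pseudovariety (\<Inter>F)"
proof (rule pseudovarietyI)
  fix S assume "S \<in> \<Inter>F"
  then show "finite_semigroup S" using assms pseudovariety_finite by blast
next
  fix S :: "nat sgrp" assume "finite_semigroup S" "card (fst S) = 1"
  then show "S \<in> \<Inter>F" using pv pseudovariety_trivial by blast
next
  fix S1 S2 P :: "nat sgrp" and \<phi>
  assume "S1 \<in> \<Inter>F" "S2 \<in> \<Inter>F" "finite_semigroup P" "is_iso P (prod_sgrp S1 S2) \<phi>"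
  then show "P \<in> \<Inter>F" by (intro InterI) (blast intro: pseudovariety_iso_prod[OF pv])
next
  fix S :: "nat sgrp" and B
  assume "S \<in> \<Inter>F" "B \<noteq> {}" "B \<subseteq> fst S" "\<forall>x\<in>B. \<forall>y\<in>B. snd S x y \<in> B"
  then show "(B, snd S) \<in> \<Inter>F" by (intro InterI) (blast intro: pseudovariety_subsemigroup[OF pv])
next
  fix S S' :: "nat sgrp" and \<phi>
  assume "S \<in> \<Inter>F" "finite_semigroup S'" "is_hom S S' \<phi>" "\<phi> ` fst S = fst S'"
  then show "S' \<in> \<Inter>F" by (intro InterI) (blast intro: pseudovariety_hom_image[OF pv])
qed

lemma pseudovariety_Int: "pseudovariety A \<Longrightarrow> pseudovariety B \<Longrightarrow> pseudovariety (A \<inter> B)"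
  using pseudovariety_Inter[of "{A, B}"] by auto

lemma pseudovariety_satisfying:
  assumes "pseudovariety U" "u \<noteq> []" "v \<noteq> []"
  shows "pseudovariety {S \<in> U. satisfies S u v}"
proof -
  have "{S \<in> U. satisfies S u v} = U \<inter> Mod {(u, v)}"
    using pseudovariety_finite[OF assms(1)] by (auto simp: Mod_def)
  moreover have "pseudovariety (Mod {(u, v)})" using assms(2,3) by (intro pseudovariety_Mod) auto
  ultimately show ?thesis using pseudovariety_Int[OF assms(1)] by simp
qed

lemma generated_pv_least: "pseudovariety V \<Longrightarrow> S \<in> V \<Longrightarrow> generated_pv S \<subseteq> V"
  by (auto simp: generated_pv_def)

lemma pseudovariety_generated_pv:
  assumes "finite_semigroup S"
  shows "pseudovariety (generated_pv S)"
  unfolding generated_pv_def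
  using pseudovariety_Mod[of "{}"] assms by (intro pseudovariety_Inter) (auto simp: Mod_def)

lemma generated_pv_self: "S \<in> generated_pv S"
  by (simp add: generated_pv_def)

lemma unique_maximal_subpv:
  assumes "pseudovariety W" "W \<subset> U" and below: "\<And>V. pseudovariety V \<Longrightarrow> V \<subset> U \<Longrightarrow> V \<subseteq> W"
  shows "maximal_subpv W U \<and> (\<forall>V. maximal_subpv V U \<longrightarrow> V = W)"
  using assms unfolding maximal_subpv_def by blast

section \<open>Membership in a pseudovariety via identities\<close>

text \<open>Members of a pseudovariety have carriers in nat, so binary products are realized on
  codes of pairs.\<close>

definition prod_encode_sgrp :: "nat sgrp \<Rightarrow> nat sgrp \<Rightarrow> nat sgrp" where
  "prod_encode_sgrp S1 S2 = (prod_encode ` (fst S1 \<times> fst S2),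
     \<lambda>x y. prod_encode (snd S1 (fst (prod_decode x)) (fst (prod_decode y)),
                        snd S2 (snd (prod_decode x)) (snd (prod_decode y))))"

lemma prod_encode_sgrp_mult:
  "snd (prod_encode_sgrp S1 S2) (prod_encode (a, b)) (prod_encode (c, d)) =
     prod_encode (snd S1 a c, snd S2 b d)"
  by (simp add: prod_encode_sgrp_def prod_encode_inverse)

lemma finite_semigroup_prod_encode_sgrp:
  assumes "finite_semigroup S1" "finite_semigroup S2"
  shows "finite_semigroup (prod_encode_sgrp S1 S2)"
  using assms unfolding finite_semigroup_def is_semigroup_def
  by (auto simp: prod_encode_sgrp_def prod_encode_inverse)

lemma is_iso_prod_encode_sgrp: "is_iso (prod_encode_sgrp S1 S2) (prod_sgrp S1 S2) prod_decode"
proof -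
  have "bij_betw prod_decode (fst (prod_encode_sgrp S1 S2)) (fst (prod_sgrp S1 S2))"
    unfolding bij_betw_def using inj_prod_decode
    by (auto simp: prod_encode_sgrp_def prod_sgrp_def image_image prod_encode_inverse
        intro: inj_on_subset)
  then show ?thesis
    by (auto simp: is_iso_def is_hom_def prod_encode_sgrp_def prod_sgrp_def prod_encode_inverse)
qed

lemma pseudovariety_prod_encode_sgrp:
  "pseudovariety V \<Longrightarrow> S1 \<in> V \<Longrightarrow> S2 \<in> V \<Longrightarrow> prod_encode_sgrp S1 S2 \<in> V"
  using pseudovariety_iso_prod pseudovariety_finite finite_semigroup_prod_encode_sgrp
    is_iso_prod_encode_sgrp by metis

lemma eval_word_prod_encode_sgrp:
  "u \<noteq> [] \<Longrightarrow> eval_word (snd (prod_encode_sgrp S1 S2)) (\<lambda>x. prod_encode (h1 x, h2 x)) u =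
     prod_encode (eval_word (snd S1) h1 u, eval_word (snd S2) h2 u)"
proof (induction u)
  case (Cons x w)
  then show ?case by (cases "w = []") (auto simp: eval_word_Cons prod_encode_sgrp_mult)
qed simp

definition trivial_sgrp :: "nat sgrp" where
  "trivial_sgrp = ({0}, \<lambda>_ _. 0)"

lemma pseudovariety_trivial_sgrp: "pseudovariety V \<Longrightarrow> trivial_sgrp \<in> V"
  by (rule pseudovariety_trivial)
    (auto simp: trivial_sgrp_def finite_semigroup_def is_semigroup_def)

fun power_sgrp :: "nat sgrp \<Rightarrow> nat \<Rightarrow> nat sgrp" where
  "power_sgrp S 0 = trivial_sgrp"
| "power_sgrp S (Suc n) = prod_encode_sgrp S (power_sgrp S n)"

lemma pseudovariety_power_sgrp: "pseudovariety V \<Longrightarrow> S \<in> V \<Longrightarrow> power_sgrp S n \<in> V"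
  by (induction n) (auto intro: pseudovariety_trivial_sgrp pseudovariety_prod_encode_sgrp)

fun tuple_assignment :: "(nat \<Rightarrow> nat) list \<Rightarrow> nat \<Rightarrow> nat" where
  "tuple_assignment [] = (\<lambda>x. 0)"
| "tuple_assignment (\<alpha> # as) = (\<lambda>x. prod_encode (\<alpha> x, tuple_assignment as x))"

lemma tuple_assignment_in:
  "\<forall>\<alpha>\<in>set as. \<forall>x. \<alpha> x \<in> fst S \<Longrightarrow> \<forall>x. tuple_assignment as x \<in> fst (power_sgrp S (length as))"
  by (induction as) (auto simp: trivial_sgrp_def prod_encode_sgrp_def)

lemma eval_word_tuple_assignment_eqD:
  assumes "u \<noteq> []" "v \<noteq> []"
    and "eval_word (snd (power_sgrp S (length as))) (tuple_assignment as) u =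
         eval_word (snd (power_sgrp S (length as))) (tuple_assignment as) v"
    and "\<alpha> \<in> set as"
  shows "eval_word (snd S) \<alpha> u = eval_word (snd S) \<alpha> v"
  using assms(3,4)
  by (induction as) (auto simp: eval_word_prod_encode_sgrp[OF assms(1)]
      eval_word_prod_encode_sgrp[OF assms(2)] prod_encode_eq)

lemma finite_assignments:
  assumes "finite A"
  shows "finite {\<alpha> :: nat \<Rightarrow> 'a. (\<forall>x<n. \<alpha> x \<in> A) \<and> (\<forall>x\<ge>n. \<alpha> x = a0)}"
proof (rule finite_subset)
  show "{\<alpha>. (\<forall>x<n. \<alpha> x \<in> A) \<and> (\<forall>x\<ge>n. \<alpha> x = a0)} \<subseteq>
        (\<lambda>xs x. if x < n then xs ! x else a0) ` {xs. set xs \<subseteq> A \<and> length xs = n}"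
  proof
    fix \<alpha> assume \<alpha>: "\<alpha> \<in> {\<alpha>. (\<forall>x<n. \<alpha> x \<in> A) \<and> (\<forall>x\<ge>n. \<alpha> x = a0)}"
    then have "\<alpha> x = (if x < n then map \<alpha> [0..<n] ! x else a0)" for x
      by (simp add: not_less)
    then have "\<alpha> = (\<lambda>x. if x < n then map \<alpha> [0..<n] ! x else a0)" by (rule ext)
    moreover have "set (map \<alpha> [0..<n]) \<subseteq> A" using \<alpha> by auto
    ultimately show "\<alpha> \<in> (\<lambda>xs x. if x < n then xs ! x else a0) ` {xs. set xs \<subseteq> A \<and> length xs = n}"
      by (intro image_eqI) auto
  qed
  show "finite ((\<lambda>xs x. if x < n then xs ! x else a0) ` {xs. set xs \<subseteq> A \<and> length xs = n})"
    using finite_lists_length_eq[OF assms] by simp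
qed

text \<open>A power of S, indexed by all assignments of the first n variables and evaluated at the
  tuple of these assignments, is relatively free: it identifies two words in these variables
  only if S satisfies the corresponding identity.\<close>

lemma generic_assignment:
  assumes V: "pseudovariety V" and "S \<in> V"
  obtains P H where "P \<in> V" "\<forall>x. H x \<in> fst P"
    "\<And>u v. u \<noteq> [] \<Longrightarrow> v \<noteq> [] \<Longrightarrow> set u \<subseteq> {..<n} \<Longrightarrow> set v \<subseteq> {..<n} \<Longrightarrow>
       eval_word (snd P) H u = eval_word (snd P) H v \<Longrightarrow> satisfies S u v"
proof -
  have S: "finite_semigroup S" using pseudovariety_finite[OF V \<open>S \<in> V\<close>] .
  then obtain a0 where a0: "a0 \<in> fst S" by (auto simp: finite_semigroup_def is_semigroup_def)
  define A where "A = {\<alpha>. (\<forall>x<n. \<alpha> x \<in> fst S) \<and> (\<forall>x\<ge>n. \<alpha> x = a0)}"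
  have "finite A" unfolding A_def using S by (intro finite_assignments) (simp add: finite_semigroup_def)
  then obtain as where as: "set as = A" using finite_list by blast
  have as_in: "\<forall>\<alpha>\<in>set as. \<forall>x. \<alpha> x \<in> fst S"
    using a0 unfolding as A_def by (simp add: not_less) (metis not_le)
  show thesis
  proof
    show "power_sgrp S (length as) \<in> V" using pseudovariety_power_sgrp[OF V \<open>S \<in> V\<close>] .
    show "\<forall>x. tuple_assignment as x \<in> fst (power_sgrp S (length as))"
      using tuple_assignment_in[OF as_in] .
  next
    fix u v
    assume uv: "u \<noteq> []" "v \<noteq> []" "set u \<subseteq> {..<n}" "set v \<subseteq> {..<n}"
      and eq: "eval_word (snd (power_sgrp S (length as))) (tuple_assignment as) u =
               eval_word (snd (power_sgrp S (length as))) (tuple_assignment as) v"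
    show "satisfies S u v" unfolding satisfies_def
    proof (intro allI impI)
      fix h :: "nat \<Rightarrow> nat" assume "\<forall>x. h x \<in> fst S"
      then have "(\<lambda>x. if x < n then h x else a0) \<in> set as" by (auto simp: as A_def)
      then have "eval_word (snd S) (\<lambda>x. if x < n then h x else a0) u =
                 eval_word (snd S) (\<lambda>x. if x < n then h x else a0) v"
        by (rule eval_word_tuple_assignment_eqD[OF uv(1,2) eq])
      moreover have "eval_word (snd S) (\<lambda>x. if x < n then h x else a0) w = eval_word (snd S) h w"
        if "set w \<subseteq> {..<n}" for w
        using that by (intro eval_word_cong) auto
      ultimately show "eval_word (snd S) h u = eval_word (snd S) h v" using uv(3,4) by metis
    qed
  qed
qed

lemma pseudovariety_word_values:
  assumes V: "pseudovariety V" "P \<in> V" and H: "\<forall>x. H x \<in> fst P" and "X \<noteq> {}"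
  shows "(eval_word (snd P) H ` {w. w \<noteq> [] \<and> set w \<subseteq> X}, snd P) \<in> V"
proof (rule pseudovariety_subsemigroup[OF V])
  let ?W = "{w. w \<noteq> [] \<and> set w \<subseteq> X}"
  have P: "is_semigroup P" using pseudovariety_finite[OF V] by (simp add: finite_semigroup_def)
  obtain x where "x \<in> X" using \<open>X \<noteq> {}\<close> by blast
  then show "eval_word (snd P) H ` ?W \<noteq> {}" by (auto intro!: exI[of _ "[x]"])
  show "eval_word (snd P) H ` ?W \<subseteq> fst P" using eval_word_in[OF P H] by auto
  show "\<forall>r\<in>eval_word (snd P) H ` ?W. \<forall>s\<in>eval_word (snd P) H ` ?W. snd P r s \<in> eval_word (snd P) H ` ?W"
  proof (intro ballI)
    fix r s assume "r \<in> eval_word (snd P) H ` ?W" "s \<in> eval_word (snd P) H ` ?W"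
    then obtain u v where uv: "u \<in> ?W" "v \<in> ?W" "r = eval_word (snd P) H u" "s = eval_word (snd P) H v"
      by blast
    then have "snd P r s = eval_word (snd P) H (u @ v)" using eval_word_append[OF P H] by simp
    moreover have "u @ v \<in> ?W" using uv by auto
    ultimately show "snd P r s \<in> eval_word (snd P) H ` ?W" by blast
  qed
qed

lemma pseudovariety_image_of_words:
  assumes V: "pseudovariety V" "P \<in> V" and H: "\<forall>x. H x \<in> fst P"
    and Q: "finite_semigroup Q" and \<beta>: "\<forall>x. \<beta> x \<in> fst Q"
    and gen: "fst Q \<subseteq> eval_word (snd Q) \<beta> ` {w. w \<noteq> [] \<and> set w \<subseteq> X}"
    and compat: "\<And>u v. u \<noteq> [] \<Longrightarrow> v \<noteq> [] \<Longrightarrow> set u \<subseteq> X \<Longrightarrow> set v \<subseteq> X \<Longrightarrow>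
       eval_word (snd P) H u = eval_word (snd P) H v \<Longrightarrow> eval_word (snd Q) \<beta> u = eval_word (snd Q) \<beta> v"
  shows "Q \<in> V"
proof -
  define W where "W = {w. w \<noteq> [] \<and> set w \<subseteq> X}"
  define ev where "ev = eval_word (snd P) H"
  define \<phi> where "\<phi> r = eval_word (snd Q) \<beta> (SOME w. w \<in> W \<and> ev w = r)" for r
  have P: "is_semigroup P" using pseudovariety_finite[OF V] by (simp add: finite_semigroup_def)
  have Qs: "is_semigroup Q" using Q by (simp add: finite_semigroup_def)
  have \<phi>_ev: "\<phi> (ev w) = eval_word (snd Q) \<beta> w" if "w \<in> W" for w
  proof -
    have "(SOME w'. w' \<in> W \<and> ev w' = ev w) \<in> W \<and> ev (SOME w'. w' \<in> W \<and> ev w' = ev w) = ev w"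
      using that by (intro someI) blast
    then show ?thesis using compat that unfolding \<phi>_def W_def ev_def by blast
  qed
  have "X \<noteq> {}" using gen Q by (auto simp: finite_semigroup_def is_semigroup_def)
  then have "(ev ` W, snd P) \<in> V" unfolding ev_def W_def by (rule pseudovariety_word_values[OF V H])
  moreover have "is_hom (ev ` W, snd P) Q \<phi>"
    unfolding is_hom_def
  proof (intro conjI ballI)
    fix r assume "r \<in> fst (ev ` W, snd P)"
    then obtain w where "w \<in> W" "r = ev w" by auto
    then show "\<phi> r \<in> fst Q" using \<phi>_ev eval_word_in[OF Qs \<beta>] by (simp add: W_def)
  next
    fix r s assume "r \<in> fst (ev ` W, snd P)" "s \<in> fst (ev ` W, snd P)"
    then obtain u v where uv: "u \<in> W" "v \<in> W" "r = ev u" "s = ev v" by auto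
    then have "\<phi> (snd P r s) = eval_word (snd Q) \<beta> (u @ v)"
      using \<phi>_ev[of "u @ v"] eval_word_append[OF P H] by (simp add: W_def ev_def)
    also have "\<dots> = snd Q (\<phi> r) (\<phi> s)"
      using uv \<phi>_ev eval_word_append[OF Qs \<beta>] by (simp add: W_def)
    finally show "\<phi> (snd (ev ` W, snd P) r s) = snd Q (\<phi> r) (\<phi> s)" by simp
  qed
  moreover have "\<phi> ` ev ` W = fst Q"
    using gen \<phi>_ev eval_word_in[OF Qs \<beta>] unfolding W_def by (auto simp: image_image)
  ultimately show ?thesis using pseudovariety_hom_image[OF V(1) _ Q] by simp
qed

theorem in_pseudovariety_if_satisfies_identities:
  assumes V: "pseudovariety V" "S \<in> V"
    and Q: "finite_semigroup Q" "\<forall>x. \<beta> x \<in> fst Q"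
    and gen: "fst Q \<subseteq> eval_word (snd Q) \<beta> ` {w. w \<noteq> [] \<and> set w \<subseteq> {..<n}}"
    and identities: "\<And>u v. u \<noteq> [] \<Longrightarrow> v \<noteq> [] \<Longrightarrow> set u \<subseteq> {..<n} \<Longrightarrow> set v \<subseteq> {..<n} \<Longrightarrow>
       satisfies S u v \<Longrightarrow> satisfies Q u v"
  shows "Q \<in> V"
proof -
  obtain P H where P: "P \<in> V" "\<forall>x. H x \<in> fst P"
    and sat: "\<And>u v. u \<noteq> [] \<Longrightarrow> v \<noteq> [] \<Longrightarrow> set u \<subseteq> {..<n} \<Longrightarrow> set v \<subseteq> {..<n} \<Longrightarrow>
       eval_word (snd P) H u = eval_word (snd P) H v \<Longrightarrow> satisfies S u v"
    using generic_assignment[OF V] by metis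
  show ?thesis
  proof (rule pseudovariety_image_of_words[OF V(1) P Q gen])
    fix u v
    assume "u \<noteq> []" "v \<noteq> []" "set u \<subseteq> {..<n}" "set v \<subseteq> {..<n}"
      "eval_word (snd P) H u = eval_word (snd P) H v"
    then have "satisfies Q u v" by (intro identities sat)
    then show "eval_word (snd Q) \<beta> u = eval_word (snd Q) \<beta> v"
      using Q(2) unfolding satisfies_def by blast
  qed
qed

section \<open>First occurrences\<close>

lemma find_SomeD: "find P xs = Some x \<Longrightarrow> P x \<and> x \<in> set xs"
  by (induction xs) (auto split: if_splits)

lemma option_neq_cases:
  assumes "r1 \<noteq> r2"
  obtains z where "z \<noteq> x" "r1 = Some z \<or> r2 = Some z" | "{r1, r2} = {None, Some x}"
proof (cases "\<exists>z. z \<noteq> x \<and> (r1 = Some z \<or> r2 = Some z)")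
  case False
  then have "r1 \<in> {None, Some x}" "r2 \<in> {None, Some x}" by (cases r1; cases r2; auto)+
  then show thesis using that(2) assms by auto
qed (use that(1) in blast)

lemma find_concat_map:
  assumes "\<forall>v\<in>C. \<sigma> v = [c]" "\<forall>v. v \<notin> C \<longrightarrow> \<sigma> v \<noteq> [] \<and> hd (\<sigma> v) \<noteq> c"
  shows "find (\<lambda>y. y \<noteq> c) (concat (map \<sigma> t) @ M) =
    (case find (\<lambda>v. v \<notin> C) t of None \<Rightarrow> find (\<lambda>y. y \<noteq> c) M | Some v \<Rightarrow> Some (hd (\<sigma> v)))"
proof (induction t)
  case (Cons v t)
  show ?case
  proof (cases "v \<in> C")
    case False
    then obtain d ds where "\<sigma> v = d # ds" "d \<noteq> c" using assms(2) by (cases "\<sigma> v") auto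
    then show ?thesis using False by simp
  qed (use Cons assms(1) in simp)
qed simp

fun first_occurrences :: "'a set \<Rightarrow> 'a list \<Rightarrow> 'a list" where
  "first_occurrences C [] = []"
| "first_occurrences C (y # w) =
     (if y \<in> C then first_occurrences C w else y # first_occurrences (insert y C) w)"

lemma first_occurrences_find:
  "first_occurrences C t =
     (case find (\<lambda>y. y \<notin> C) t of None \<Rightarrow> [] | Some z \<Rightarrow> z # first_occurrences (insert z C) t)"
proof (induction t arbitrary: C)
  case (Cons y w)
  have "first_occurrences (insert y C) (y # w) = first_occurrences (insert y C) w" by simp
  then show ?case using Cons by (auto split: option.splits)
qed simp

lemma first_occurrences_snoc:
  "first_occurrences C (t @ [y]) = first_occurrences C t @ (if y \<in> C \<union> set t then [] else [y])"
  by (induction t arbitrary: C) auto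

lemma set_first_occurrences: "set (first_occurrences C t) = set t - C"
  by (induction t arbitrary: C) auto

lemma first_occurrences_eq_if_find_eq:
  assumes "\<And>D. find (\<lambda>y. y \<notin> D) t1 = find (\<lambda>y. y \<notin> D) t2"
  shows "first_occurrences C t1 = first_occurrences C t2"
proof (induction "card (set t1 - C)" arbitrary: C rule: less_induct)
  case less
  show ?case
  proof (cases "find (\<lambda>y. y \<notin> C) t1")
    case None
    then show ?thesis using assms first_occurrences_find[of C t1] first_occurrences_find[of C t2] by simp
  next
    case (Some z)
    then have "z \<in> set t1" "z \<notin> C" by (auto dest: find_SomeD)
    then have "card (set t1 - insert z C) < card (set t1 - C)" by (intro psubset_card_mono) auto
    then have "first_occurrences (insert z C) t1 = first_occurrences (insert z C) t2" by (rule less)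
    then show ?thesis
      using Some assms first_occurrences_find[of C t1] first_occurrences_find[of C t2] by simp
  qed
qed

lemma first_occurrences_two_letters:
  fixes X :: "nat list"
  assumes "set X \<subseteq> {0, 1, 2}" "0 \<in> set X" "2 \<in> set X" "find (\<lambda>y. y \<noteq> 1) X = Some a"
  shows "first_occurrences {} (1 # X) = [1, a, 2 - a]"
proof -
  have a: "a \<in> set X" "a \<in> {0, 2}" using assms(1) find_SomeD[OF assms(4)] by auto
  have "find (\<lambda>y. y \<notin> {a, 1}) X = Some (2 - a)"
  proof -
    obtain b where b: "find (\<lambda>y. y \<notin> {a, 1}) X = Some b"
      using assms a by (cases "find (\<lambda>y. y \<notin> {a, 1}) X") (auto simp: find_None_iff)
    then have "b \<in> set X - {a, 1}" by (auto dest: find_SomeD)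
    then show ?thesis using b assms(1) a(2) by auto
  qed
  moreover have "first_occurrences {2 - a, a, 1} X = []"
  proof -
    have "set X \<subseteq> {2 - a, a, 1}" using assms(1) a(2) by auto
    then show ?thesis by (metis Diff_eq_empty_iff set_empty set_first_occurrences)
  qed
  ultimately have "first_occurrences {a, 1} X = [2 - a]"
    using first_occurrences_find[of "{a, 1}" X] by simp
  then show ?thesis
    using assms(4) first_occurrences_find[of "{1}" X] by simp
qed

section \<open>The identities of T\<close>

abbreviation T_basis :: "(nat list \<times> nat list) set" where
  "T_basis \<equiv> {([0, 1, 1], [0, 1]), ([0, 1, 2], [0, 1, 2, 1])}"

lemma finite_semigroup_T: "finite_semigroup T_sgrp"
  unfolding finite_semigroup_def is_semigroup_def T_sgrp_def
  by (simp add: T_mult_def)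

lemma T_satisfies_basis: "satisfies T_sgrp u v" if "(u, v) \<in> T_basis"
  using that unfolding satisfies_def T_sgrp_def by (auto simp: T_mult_def)

lemma eval_word_T:
  "eval_word T_mult h (x # t) =
     (case find (\<lambda>y. h y \<noteq> 2) t of None \<Rightarrow> h x | Some z \<Rightarrow> T_mult (h x) (h z))"
  by (induction t arbitrary: x) (auto simp: T_mult_def split: option.splits)

lemma T_satisfies_heads:
  assumes "satisfies T_sgrp (x1 # t1) (x2 # t2)"
  shows "x1 = x2"
proof (rule ccontr)
  assume "x1 \<noteq> x2"
  define h where "h z = (if z = x1 then 0 else 3 :: nat)" for z
  have "eval_word T_mult h (x1 # t1) = eval_word T_mult h (x2 # t2)"
    using assms unfolding satisfies_def T_sgrp_def by (simp add: h_def)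
  then show False using \<open>x1 \<noteq> x2\<close> by (simp add: eval_word_T h_def T_mult_def split: option.splits)
qed

lemma T_satisfies_find:
  assumes "satisfies T_sgrp (x # t1) (x # t2)"
  shows "find (\<lambda>y. y \<notin> C) t1 = find (\<lambda>y. y \<notin> C) t2"
proof (rule ccontr)
  define r1 where "r1 = find (\<lambda>y. y \<notin> C) t1"
  define r2 where "r2 = find (\<lambda>y. y \<notin> C) t2"
  assume "find (\<lambda>y. y \<notin> C) t1 \<noteq> find (\<lambda>y. y \<notin> C) t2"
  then have "r1 \<noteq> r2" by (simp add: r1_def r2_def)
  have r_notin: "v \<notin> C" if "r1 = Some v \<or> r2 = Some v" for v
    using that by (auto simp: r1_def r2_def dest: find_SomeD)
  have evaluations_agree: "(case r1 of None \<Rightarrow> h x | Some v \<Rightarrow> T_mult (h x) (h v)) =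
               (case r2 of None \<Rightarrow> h x | Some v \<Rightarrow> T_mult (h x) (h v))"
    if "\<And>y. h y = 2 \<longleftrightarrow> y \<in> C" "\<And>y. h y \<in> {0, 1, 2, 3, 4}" for h
  proof -
    have "find (\<lambda>y. h y \<noteq> 2) t = find (\<lambda>y. y \<notin> C) t" for t using that(1) by simp
    moreover have "eval_word T_mult h (x # t1) = eval_word T_mult h (x # t2)"
      using assms that(2) unfolding satisfies_def T_sgrp_def by simp
    ultimately show ?thesis unfolding eval_word_T r1_def r2_def by simp
  qed
  from \<open>r1 \<noteq> r2\<close> show False
  proof (cases rule: option_neq_cases[where x = x])
    case (1 z)
    txt \<open>Letters of C go to the idempotent c and are skipped; the head goes to b unless it
      is in C, and the distinguished letter z to e.\<close>
    define h where "h y = (if y \<in> C then 2 else if y = x then 1 else if y = z then 4 else 0 :: nat)" for y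
    have "(case r1 of None \<Rightarrow> h x | Some v \<Rightarrow> T_mult (h x) (h v)) =
          (case r2 of None \<Rightarrow> h x | Some v \<Rightarrow> T_mult (h x) (h v))"
      by (rule evaluations_agree) (simp_all add: h_def)
    then show False using 1 r_notin \<open>r1 \<noteq> r2\<close>
      by (cases r1; cases r2) (auto simp: h_def T_mult_def split: if_splits)
  next
    case 2
    define h where "h y = (if y \<in> C then 2 else if y = x then 1 else 0 :: nat)" for y
    have "(case r1 of None \<Rightarrow> h x | Some v \<Rightarrow> T_mult (h x) (h v)) =
          (case r2 of None \<Rightarrow> h x | Some v \<Rightarrow> T_mult (h x) (h v))"
      by (rule evaluations_agree) (simp_all add: h_def)
    then show False using 2 r_notin \<open>r1 \<noteq> r2\<close>
      by (auto simp: h_def T_mult_def doubleton_eq_iff)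
  qed
qed

lemma T_satisfies_if_find_eq:
  assumes "\<And>C. find (\<lambda>y. y \<notin> C) t1 = find (\<lambda>y. y \<notin> C) t2"
  shows "satisfies T_sgrp (x # t1) (x # t2)"
  unfolding satisfies_def T_sgrp_def
proof (intro allI impI)
  fix h :: "nat \<Rightarrow> nat"
  have "find (\<lambda>y. h y \<noteq> 2) t1 = find (\<lambda>y. h y \<noteq> 2) t2" using assms[of "{y. h y = 2}"] by simp
  then show "eval_word (snd ({0, 1, 2, 3, 4}, T_mult)) h (x # t1) =
             eval_word (snd ({0, 1, 2, 3, 4}, T_mult)) h (x # t2)"
    using assms by (simp add: eval_word_T)
qed

lemma T_satisfies_iff:
  "satisfies T_sgrp (x1 # t1) (x2 # t2) \<longleftrightarrow>
     x1 = x2 \<and> (\<forall>C. find (\<lambda>y. y \<notin> C) t1 = find (\<lambda>y. y \<notin> C) t2)"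
  using T_satisfies_heads T_satisfies_find T_satisfies_if_find_eq by metis

lemma derivable_drop_repeated_letter:
  assumes "T_basis \<subseteq> E" "p \<noteq> []"
  shows "derivable E (p @ y # q @ [y]) (p @ y # q)"
proof (cases "q = []")
  case True
  have "derivable E (subst_word (\<lambda>n. if n = 0 then p else [y]) [0, 1, 1])
                    (subst_word (\<lambda>n. if n = 0 then p else [y]) [0, 1])"
    using assms by (intro derivable_instance) auto
  then show ?thesis using True by (simp add: subst_word_def)
next
  case False
  have "derivable E (subst_word (\<lambda>n. if n = 0 then p else if n = 2 then q else [y]) [0, 1, 2])
                    (subst_word (\<lambda>n. if n = 0 then p else if n = 2 then q else [y]) [0, 1, 2, 1])"
    using assms False by (intro derivable_instance) auto
  then show ?thesis by (simp add: subst_word_def derivable.sym)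
qed

lemma derivable_first_occurrences:
  assumes "T_basis \<subseteq> E"
  shows "derivable E (x # t) (x # first_occurrences {} t)"
proof (induction t rule: rev_induct)
  case Nil
  then show ?case by (simp add: derivable.refl)
next
  case (snoc y t)
  have step: "derivable E ((x # t) @ [y]) ((x # first_occurrences {} t) @ [y])"
    using snoc by (intro derivable.mult_right) simp_all
  show ?case
  proof (cases "y \<in> set t")
    case True
    then obtain r1 r2 where r: "first_occurrences {} t = r1 @ y # r2"
      by (metis Diff_empty set_first_occurrences split_list)
    have "derivable E ((x # r1) @ y # r2 @ [y]) ((x # r1) @ y # r2)"
      using assms by (intro derivable_drop_repeated_letter) simp_all
    then show ?thesis using True r step derivable.trans by (simp add: first_occurrences_snoc)
  qed (use step in \<open>simp add: first_occurrences_snoc\<close>)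
qed

theorem T_identities:
  assumes "u \<noteq> []" "v \<noteq> []"
  shows "satisfies T_sgrp u v \<longleftrightarrow> derivable T_basis u v"
proof
  assume "derivable T_basis u v"
  moreover have "\<forall>(u, v)\<in>T_basis. u \<noteq> [] \<and> v \<noteq> [] \<and> satisfies T_sgrp u v"
    using T_satisfies_basis by auto
  moreover have "is_semigroup T_sgrp" using finite_semigroup_T by (simp add: finite_semigroup_def)
  ultimately show "satisfies T_sgrp u v" using satisfies_if_derivable by blast
next
  obtain x1 t1 x2 t2 where u: "u = x1 # t1" and v: "v = x2 # t2"
    using assms by (meson neq_Nil_conv)
  assume "satisfies T_sgrp u v"
  then have "x1 = x2" "first_occurrences {} t1 = first_occurrences {} t2"
    unfolding u v T_satisfies_iff by (auto intro: first_occurrences_eq_if_find_eq)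
  then have "derivable T_basis v (x1 # first_occurrences {} t1)"
    unfolding v by (simp add: derivable_first_occurrences)
  moreover have "derivable T_basis u (x1 # first_occurrences {} t1)"
    unfolding u by (simp add: derivable_first_occurrences)
  ultimately show "derivable T_basis u v" by (blast intro: derivable.trans derivable.sym)
qed

section \<open>The unique maximal subpseudovariety\<close>

lemma derivable_xyzx_if_separated:
  fixes X1 X2 :: "nat list"
  assumes "T_basis \<subseteq> E" and d: "derivable E (0 # 1 # X1) (0 # 1 # X2)"
    and X1: "set X1 \<subseteq> {0, 1, 2}" "0 \<in> set X1" "2 \<in> set X1" "find (\<lambda>y. y \<noteq> 1) X1 = Some a"
    and X2: "set X2 \<subseteq> {0, 1, 2}" "0 \<in> set X2" "2 \<in> set X2" "find (\<lambda>y. y \<noteq> 1) X2 = Some b"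
    and "a \<noteq> b"
  shows "derivable E [0, 1, 2, 0] [0, 1, 0, 2]"
proof -
  have "derivable E (0 # 1 # X1) [0, 1, a, 2 - a]"
    using derivable_first_occurrences[OF assms(1), of 0 "1 # X1"] first_occurrences_two_letters[OF X1]
    by simp
  moreover have "derivable E (0 # 1 # X2) [0, 1, b, 2 - b]"
    using derivable_first_occurrences[OF assms(1), of 0 "1 # X2"] first_occurrences_two_letters[OF X2]
    by simp
  ultimately have "derivable E [0, 1, a, 2 - a] [0, 1, b, 2 - b]"
    using d by (blast intro: derivable.trans derivable.sym)
  moreover have "a \<in> {0, 2}" "b \<in> {0, 2}" using X1 X2 by (auto dest!: find_SomeD)
  ultimately show ?thesis using \<open>a \<noteq> b\<close> by (auto intro: derivable.sym)
qed

lemma derivable_xyzx_of_distinct_heads: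
  assumes "T_basis \<subseteq> E" "derivable E (x1 # t1) (x2 # t2)" "x1 \<noteq> x2"
  shows "derivable E [0, 1, 2, 0] [0, 1, 0, 2]"
proof -
  define \<sigma> where "\<sigma> v = (if v = x1 then [2] else [0 :: nat])" for v
  define X where "X a t = a # concat (map \<sigma> t) @ [0, 2]" for a t
  have "derivable E ([0, 1] @ subst_word \<sigma> (x1 # t1) @ [0, 2]) ([0, 1] @ subst_word \<sigma> (x2 # t2) @ [0, 2])"
    using assms(2) by (intro derivable_in_context) (simp_all add: \<sigma>_def)
  then have "derivable E (0 # 1 # X 2 t1) (0 # 1 # X 0 t2)"
    using assms(3) by (simp add: subst_word_def X_def \<sigma>_def)
  moreover have "set (X a t) \<subseteq> {0, 1, 2}" "0 \<in> set (X a t)" "2 \<in> set (X a t)"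
    if "a \<in> {0, 2}" for a t
    using that by (auto simp: X_def \<sigma>_def)
  moreover have "find (\<lambda>y. y \<noteq> 1) (X a t) = Some a" if "a \<in> {0, 2}" for a t
    using that by (auto simp: X_def)
  ultimately show ?thesis
    by (intro derivable_xyzx_if_separated[OF assms(1), where a = 2 and b = 0]) auto
qed

lemma derivable_xyzx_of_colouring:
  fixes col :: "nat \<Rightarrow> nat"
  assumes "T_basis \<subseteq> E" and d: "derivable E (x # t1) (x # t2)"
    and col: "\<forall>v. col v \<in> {0, 2}" "c \<in> {0, 2}" "x \<notin> C \<Longrightarrow> col x = 0"
    and sep: "case_option c col (find (\<lambda>v. v \<notin> C) t1) \<noteq> case_option c col (find (\<lambda>v. v \<notin> C) t2)"
  shows "derivable E [0, 1, 2, 0] [0, 1, 0, 2]"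
proof -
  have col_ne_1: "col v \<noteq> 1" for v using col(1)[rule_format, of v] by auto
  txt \<open>Letters of C become y, the head becomes x y and every other letter x or z according
    to col; with the contexts L and M both sides take the form x y X, and the first letter
    of X other than y decides between the normal forms xyzx and xyxz.\<close>
  define \<sigma> where "\<sigma> v = (if v \<in> C then [1] else if v = x then [0, 1] else [col v])" for v
  define L where "L = (if x \<in> C then [0] else [] :: nat list)"
  define M where "M = [c, 2 - c]"
  define X where "X t = concat (map \<sigma> t) @ M" for t
  have word: "L @ subst_word \<sigma> (x # t) @ M = 0 # 1 # X t" for t
    by (simp add: subst_word_def L_def \<sigma>_def X_def)
  have "derivable E (L @ subst_word \<sigma> (x # t1) @ M) (L @ subst_word \<sigma> (x # t2) @ M)"
    using d by (intro derivable_in_context) (simp_all add: \<sigma>_def M_def)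
  moreover have "set (X t) \<subseteq> {0, 1, 2}" "0 \<in> set (X t)" "2 \<in> set (X t)" for t
  proof -
    have "set (\<sigma> v) \<subseteq> {0, 1, 2}" for v using col(1)[rule_format, of v] by (auto simp: \<sigma>_def)
    moreover have "set M = {0, 2}" using col(2) by (auto simp: M_def)
    ultimately show "set (X t) \<subseteq> {0, 1, 2}" "0 \<in> set (X t)" "2 \<in> set (X t)"
      by (auto simp: X_def)
  qed
  moreover have "find (\<lambda>y. y \<noteq> 1) (X t) = Some (case_option c col (find (\<lambda>v. v \<notin> C) t))" for t
  proof -
    have "find (\<lambda>y. y \<noteq> 1) (X t) =
      (case find (\<lambda>v. v \<notin> C) t of None \<Rightarrow> find (\<lambda>y. y \<noteq> 1) M | Some v \<Rightarrow> Some (hd (\<sigma> v)))"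
      unfolding X_def using col_ne_1 by (intro find_concat_map) (auto simp: \<sigma>_def)
    moreover have "v \<notin> C \<Longrightarrow> hd (\<sigma> v) = col v" for v using col(3) by (auto simp: \<sigma>_def)
    ultimately show ?thesis using col(2)
      by (auto simp: M_def split: option.split dest: find_SomeD)
  qed
  ultimately show ?thesis using sep unfolding word
    by (intro derivable_xyzx_if_separated[OF assms(1)]) blast+
qed

lemma derivable_xyzx_of_distinct_finds:
  assumes "T_basis \<subseteq> E" "derivable E (x # t1) (x # t2)"
    and "find (\<lambda>v. v \<notin> C) t1 \<noteq> find (\<lambda>v. v \<notin> C) t2"
  shows "derivable E [0, 1, 2, 0] [0, 1, 0, 2]"
  using assms(3)
proof (cases rule: option_neq_cases[where x = x])
  case (1 z)
  show ?thesis
    by (rule derivable_xyzx_of_colouring[OF assms(1,2), where col = "\<lambda>v. if v = z then 2 else 0"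
          and c = 0 and C = C]) (use 1 assms(3) in \<open>auto split: option.split\<close>)
next
  case 2
  show ?thesis
    by (rule derivable_xyzx_of_colouring[OF assms(1,2), where col = "\<lambda>v. 0" and c = 2 and C = C])
      (use 2 assms(3) in \<open>auto simp: doubleton_eq_iff\<close>)
qed

lemma T_satisfies_if_not_xyzx:
  assumes S: "is_semigroup S" and basis: "\<And>u v. (u, v) \<in> T_basis \<Longrightarrow> satisfies S u v"
    and not_xyzx: "\<not> satisfies S [0, 1, 2, 0] [0, 1, 0, 2]"
    and w: "satisfies S w1 w2" "w1 \<noteq> []" "w2 \<noteq> []"
  shows "satisfies T_sgrp w1 w2"
proof (rule ccontr)
  assume not_T: "\<not> satisfies T_sgrp w1 w2"
  define E where "E = insert (w1, w2) T_basis"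
  obtain x1 t1 x2 t2 where w12: "w1 = x1 # t1" "w2 = x2 # t2" using w(2,3) by (meson neq_Nil_conv)
  have "T_basis \<subseteq> E" and d: "derivable E (x1 # t1) (x2 # t2)"
    unfolding E_def w12 by (auto intro: derivable.ax)
  have "derivable E [0, 1, 2, 0] [0, 1, 0, 2]"
  proof (cases "x1 = x2")
    case True
    with not_T obtain C where "find (\<lambda>y. y \<notin> C) t1 \<noteq> find (\<lambda>y. y \<notin> C) t2"
      unfolding w12 T_satisfies_iff by blast
    then show ?thesis
      using derivable_xyzx_of_distinct_finds \<open>T_basis \<subseteq> E\<close> d True by blast
  qed (use derivable_xyzx_of_distinct_heads \<open>T_basis \<subseteq> E\<close> d in blast)
  moreover have "\<forall>(u, v)\<in>E. u \<noteq> [] \<and> v \<noteq> [] \<and> satisfies S u v"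
    using w basis by (auto simp: E_def)
  ultimately show False using satisfies_if_derivable[OF S] not_xyzx by blast
qed

definition T_generator :: "nat \<Rightarrow> nat" where
  "T_generator x = (if x = 0 then 1 else if x = 1 then 2 else 4)"

lemma T_generator_in: "\<forall>x. T_generator x \<in> fst T_sgrp"
  by (simp add: T_generator_def T_sgrp_def)

lemma T_generated:
  "fst T_sgrp \<subseteq> eval_word (snd T_sgrp) T_generator ` {w. w \<noteq> [] \<and> set w \<subseteq> {..<3}}"
proof -
  have "fst T_sgrp = eval_word (snd T_sgrp) T_generator ` {[0, 0], [0], [1], [0, 2], [2]}"
    by (auto simp: T_sgrp_def T_generator_def T_mult_def)
  also have "\<dots> \<subseteq> eval_word (snd T_sgrp) T_generator ` {w. w \<noteq> [] \<and> set w \<subseteq> {..<3}}"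
    by (intro image_mono) auto
  finally show ?thesis .
qed

lemma T_in_pseudovariety:
  assumes V: "pseudovariety V" "S \<in> V" and basis: "\<And>u v. (u, v) \<in> T_basis \<Longrightarrow> satisfies S u v"
    and not_xyzx: "\<not> satisfies S [0, 1, 2, 0] [0, 1, 0, 2]"
  shows "T_sgrp \<in> V"
proof (rule in_pseudovariety_if_satisfies_identities[OF V finite_semigroup_T])
  show "\<forall>x. T_generator x \<in> fst T_sgrp" by (rule T_generator_in)
  show "fst T_sgrp \<subseteq> eval_word (snd T_sgrp) T_generator ` {w. w \<noteq> [] \<and> set w \<subseteq> {..<3}}"
    by (rule T_generated)
  have "is_semigroup S" using pseudovariety_finite[OF V] by (simp add: finite_semigroup_def)
  then show "satisfies T_sgrp u v" if "u \<noteq> []" "v \<noteq> []" "satisfies S u v" for u v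
    using T_satisfies_if_not_xyzx basis not_xyzx that by blast
qed

lemma T_not_xyzx: "\<not> satisfies T_sgrp [0, 1, 2, 0] [0, 1, 0, 2]"
proof
  assume "satisfies T_sgrp [0, 1, 2, 0] [0, 1, 0, 2]"
  then have "eval_word (snd T_sgrp) T_generator [0, 1, 2, 0] =
             eval_word (snd T_sgrp) T_generator [0, 1, 0, 2]"
    using T_generator_in unfolding satisfies_def by blast
  then show False by (simp add: T_sgrp_def T_mult_def T_generator_def)
qed

lemma generated_pv_T_satisfies_basis:
  assumes "S \<in> generated_pv T_sgrp" "(u, v) \<in> T_basis"
  shows "satisfies S u v"
proof -
  have "pseudovariety (Mod T_basis)" by (rule pseudovariety_Mod) auto
  moreover have "T_sgrp \<in> Mod T_basis" using finite_semigroup_T T_satisfies_basis by (simp add: Mod_def)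
  ultimately have "generated_pv T_sgrp \<subseteq> Mod T_basis" by (rule generated_pv_least)
  then show ?thesis using assms by (auto simp: Mod_def)
qed

lemma proper_subpv_satisfies_xyzx:
  assumes V: "pseudovariety V" "V \<subset> generated_pv T_sgrp" and "S \<in> V"
  shows "satisfies S [0, 1, 2, 0] [0, 1, 0, 2]"
proof (rule ccontr)
  assume "\<not> satisfies S [0, 1, 2, 0] [0, 1, 0, 2]"
  moreover have "satisfies S u v" if "(u, v) \<in> T_basis" for u v
    using generated_pv_T_satisfies_basis V(2) \<open>S \<in> V\<close> that by blast
  ultimately have "T_sgrp \<in> V" using T_in_pseudovariety[OF V(1) \<open>S \<in> V\<close>] by blast
  then show False using generated_pv_least[OF V(1)] V(2) by blast
qed

theorem proposition5p30:
  shows "(\<forall>u v. u \<noteq> [] \<and> v \<noteq> [] \<longrightarrow>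
            (satisfies T_sgrp u v \<longleftrightarrow>
             derivable {([0, 1, 1], [0, 1]), ([0, 1, 2], [0, 1, 2, 1])} u v))
       \<and> maximal_subpv {S \<in> generated_pv T_sgrp. satisfies S [0, 1, 2, 0] [0, 1, 0, 2]}
                       (generated_pv T_sgrp)
       \<and> (\<forall>V. maximal_subpv V (generated_pv T_sgrp) \<longrightarrow>
              V = {S \<in> generated_pv T_sgrp. satisfies S [0, 1, 2, 0] [0, 1, 0, 2]})"
proof -
  let ?U = "generated_pv T_sgrp" and ?W = "{S \<in> generated_pv T_sgrp. satisfies S [0, 1, 2, 0] [0, 1, 0, 2]}"
  have U: "pseudovariety ?U" using pseudovariety_generated_pv[OF finite_semigroup_T] .
  have W: "pseudovariety ?W" using pseudovariety_satisfying[OF U] by simp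
  have "T_sgrp \<notin> ?W" using T_not_xyzx by blast
  then have "?W \<subset> ?U" using generated_pv_self by blast
  moreover have "V \<subseteq> ?W" if "pseudovariety V" "V \<subset> ?U" for V
    using proper_subpv_satisfies_xyzx[OF that] that(2) by blast
  ultimately have "maximal_subpv ?W ?U \<and> (\<forall>V. maximal_subpv V ?U \<longrightarrow> V = ?W)"
    by (rule unique_maximal_subpv[OF W])
  then show ?thesis using T_identities by simp
qed

end
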